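(* Let $F:\mathcal{P}(V,A)\to S_2(A)$ be a weakly viable, reducible consular election rule satisfying SPP and SPO. Then $F$ is Marian if and only if its range graph $\mathcal{G}(F)$ is acyclic.
   Context: $V$ is a finite nonempty set of voters, $A$ a finite set of alternatives; a profile $P$ assigns to each voter $i$ a linear order $P_i$ on $A$; $P_i'P_{-i}$ replaces voter $i$'s order by $P_i'$; $P|_B$ is the profile of restrictions to $B\subseteq A$. $S_2(A)$ is the set of 2-element subsets of $A$; a consular election rule is a map $F:\mathcal{P}(V,A)\to S_2(A)$. SPO: for all $P$, $i$, $P_i'$, $\mathrm{best}(P_i,F(P))\succeq_i\mathrm{best}(P_i,F(P_i'P_{-i}))$; SPP: same with $\mathrm{worst}$, where $\mathrm{best}(P_i,W)$, $\mathrm{worst}(P_i,W)$ are the $P_i$-best and $P_i$-worst elements of $W$. Weakly viable: every $a\in A$ lies in $F(P)$ for some $P$. $F$ is reducible if there is a partition $A=B\uplus C$ and social choice functions $G:\mathcal{P}(V,B)\to B$, $H:\mathcal{P}(V,C)\to C$ with $F(P)=\{G(P|_B),H(P|_C)\}$ for all $P$. $F$ is Marian if some $m\in A$ lies in $F(P)$ for every profile $P$. The range graph $\mathcal{G}(F)$ has vertex set $A$ and edge set equal to the range of $F$. *)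

theory Defs
  imports Main
begin

text \<open>Preferences: a voter's order is a relation r with (x,y) \<in> r meaning
  x is ranked at least as high as y (x weakly preferred to y).\<close>

definition profiles :: "'v set \<Rightarrow> 'a set \<Rightarrow> ('v \<Rightarrow> 'a rel) set" where
  "profiles V A = {P. (\<forall>i\<in>V. linear_order_on A (P i)) \<and> (\<forall>i. i \<notin> V \<longrightarrow> P i = {})}"

definition restrict_profile :: "('v \<Rightarrow> 'a rel) \<Rightarrow> 'a set \<Rightarrow> ('v \<Rightarrow> 'a rel)" where
  "restrict_profile P B = (\<lambda>i. P i \<inter> (B \<times> B))"

definition S2 :: "'a set \<Rightarrow> 'a set set" where
  "S2 A = {W. W \<subseteq> A \<and> card W = 2}"

definition consular_rule :: "'v set \<Rightarrow> 'a set \<Rightarrow> (('v \<Rightarrow> 'a rel) \<Rightarrow> 'a set) \<Rightarrow> bool" where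
  "consular_rule V A F \<longleftrightarrow> (\<forall>P\<in>profiles V A. F P \<in> S2 A)"

definition best :: "'a rel \<Rightarrow> 'a set \<Rightarrow> 'a" where
  "best r W = (THE w. w \<in> W \<and> (\<forall>x\<in>W. (w, x) \<in> r))"

definition worst :: "'a rel \<Rightarrow> 'a set \<Rightarrow> 'a" where
  "worst r W = (THE w. w \<in> W \<and> (\<forall>x\<in>W. (x, w) \<in> r))"

definition SPO :: "'v set \<Rightarrow> 'a set \<Rightarrow> (('v \<Rightarrow> 'a rel) \<Rightarrow> 'a set) \<Rightarrow> bool" where
  "SPO V A F \<longleftrightarrow> (\<forall>P\<in>profiles V A. \<forall>i\<in>V. \<forall>Q. linear_order_on A Q \<longrightarrow>
      (best (P i) (F P), best (P i) (F (P(i := Q)))) \<in> P i)"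

definition SPP :: "'v set \<Rightarrow> 'a set \<Rightarrow> (('v \<Rightarrow> 'a rel) \<Rightarrow> 'a set) \<Rightarrow> bool" where
  "SPP V A F \<longleftrightarrow> (\<forall>P\<in>profiles V A. \<forall>i\<in>V. \<forall>Q. linear_order_on A Q \<longrightarrow>
      (worst (P i) (F P), worst (P i) (F (P(i := Q)))) \<in> P i)"

definition weakly_viable :: "'v set \<Rightarrow> 'a set \<Rightarrow> (('v \<Rightarrow> 'a rel) \<Rightarrow> 'a set) \<Rightarrow> bool" where
  "weakly_viable V A F \<longleftrightarrow> (\<forall>a\<in>A. \<exists>P\<in>profiles V A. a \<in> F P)"

definition reducible :: "'v set \<Rightarrow> 'a set \<Rightarrow> (('v \<Rightarrow> 'a rel) \<Rightarrow> 'a set) \<Rightarrow> bool" where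
  "reducible V A F \<longleftrightarrow> (\<exists>B C G H. B \<union> C = A \<and> B \<inter> C = {} \<and>
      (\<forall>Q\<in>profiles V B. G Q \<in> B) \<and> (\<forall>Q\<in>profiles V C. H Q \<in> C) \<and>
      (\<forall>P\<in>profiles V A. F P = {G (restrict_profile P B), H (restrict_profile P C)}))"

definition marian :: "'v set \<Rightarrow> 'a set \<Rightarrow> (('v \<Rightarrow> 'a rel) \<Rightarrow> 'a set) \<Rightarrow> bool" where
  "marian V A F \<longleftrightarrow> (\<exists>m\<in>A. \<forall>P\<in>profiles V A. m \<in> F P)"

definition range_graph_edges :: "'v set \<Rightarrow> 'a set \<Rightarrow> (('v \<Rightarrow> 'a rel) \<Rightarrow> 'a set) \<Rightarrow> 'a set set" where
  "range_graph_edges V A F = F ` profiles V A"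

definition ugraph_acyclic :: "'a set \<Rightarrow> 'a set set \<Rightarrow> bool" where
  "ugraph_acyclic Vs E \<longleftrightarrow> \<not> (\<exists>vs. length vs \<ge> 3 \<and> distinct vs \<and> set vs \<subseteq> Vs \<and>
      (\<forall>j < length vs. {vs ! j, vs ! ((j + 1) mod length vs)} \<in> E))"

end

theory Submission
  imports Defs
begin

text \<open>A Marian rule's range graph is a star centred at the Marian alternative, and a star has
  no cycle. Conversely, write \<open>F P = {G (P|B), H (P|C)}\<close>. Weak viability forces \<open>G\<close> onto
  \<open>B\<close> and \<open>H\<close> onto \<open>C\<close>, and a profile on \<open>B\<close> and one on \<open>C\<close> can be glued (ranking \<open>B\<close> above
  \<open>C\<close>) to a profile on \<open>A\<close> with these restrictions. So every pair \<open>{b, c}\<close> with \<open>b \<in> B\<close>,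
  \<open>c \<in> C\<close> is in the range: the range graph is complete bipartite between \<open>B\<close> and \<open>C\<close>. It
  contains a 4-cycle unless \<open>B\<close> or \<open>C\<close> is a singleton \<open>{m}\<close>, and then \<open>m\<close> is in every
  \<open>F P\<close>.\<close>

lemma linear_order_on_Restr_subset:
  assumes "linear_order_on A r" "B \<subseteq> A"
  shows "linear_order_on B (Restr r B)"
  using assms unfolding order_on_defs refl_on_def trans_def antisym_def total_on_def by blast

lemma linear_order_on_Un_disjoint:
  assumes "linear_order_on B r" "linear_order_on C s" "B \<inter> C = {}"
  shows "linear_order_on (B \<union> C) (r \<union> s \<union> B \<times> C)"
proof -
  have r: "r \<subseteq> B \<times> B" "refl_on B r" "trans r" "antisym r" "total_on B r"
    and s: "s \<subseteq> C \<times> C" "refl_on C s" "trans s" "antisym s" "total_on C s"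
    using assms(1,2) by (auto simp: order_on_defs)
  have "trans (r \<union> s \<union> B \<times> C)"
    using r(1,3) s(1,3) assms(3) unfolding trans_def by blast
  moreover have "antisym (r \<union> s \<union> B \<times> C)"
    using r(1,4) s(1,4) assms(3) unfolding antisym_def by blast
  ultimately show ?thesis
    using r s unfolding order_on_defs refl_on_def total_on_def by blast
qed

lemma ugraph_acyclic_if_common_vertex:
  assumes "\<forall>e\<in>E. m \<in> e"
  shows "ugraph_acyclic Vs E"
  unfolding ugraph_acyclic_def
proof
  assume "\<exists>vs. length vs \<ge> 3 \<and> distinct vs \<and> set vs \<subseteq> Vs \<and>
      (\<forall>j < length vs. {vs ! j, vs ! ((j + 1) mod length vs)} \<in> E)"
  then obtain vs where len: "length vs \<ge> 3" and dist: "distinct vs"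
    and cycle: "\<forall>j < length vs. {vs ! j, vs ! (Suc j mod length vs)} \<in> E" by auto
  define n where "n = length vs"
  obtain k where "k < n" and m_only_at_k: "\<forall>i<n. vs ! i = m \<longrightarrow> i = k"
  proof (cases "m \<in> set vs")
    case True
    then obtain k where k: "k < n" "vs ! k = m" by (auto simp: in_set_conv_nth n_def)
    have "\<forall>i<n. vs ! i = m \<longrightarrow> i = k"
      using k dist by (auto simp: n_def nth_eq_iff_index_eq)
    then show thesis using that k(1) by blast
  next
    case False
    then have "\<forall>i<n. vs ! i \<noteq> m" unfolding n_def using nth_mem by blast
    moreover have "0 < n" using len unfolding n_def by linarith
    ultimately show thesis using that by blast
  qed
  \<comment> \<open>\<open>m\<close> occurs on the cycle at most at position \<open>k\<close>, so the edge after it avoids \<open>m\<close>.\<close>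
  define j where "j = Suc k mod n"
  have "Suc j mod n = Suc (Suc k) mod n" by (simp add: j_def mod_Suc_eq)
  then have "j < n" "j \<noteq> k" "Suc j mod n < n" "Suc j mod n \<noteq> k"
    using \<open>k < n\<close> len by (auto simp: j_def n_def mod_Suc)
  moreover have "vs ! j = m \<or> vs ! (Suc j mod n) = m"
    using cycle assms \<open>j < n\<close> by (auto simp: n_def)
  ultimately show False using m_only_at_k by blast
qed

lemma not_ugraph_acyclic_if_square:
  assumes "distinct [a, b, c, d]" "{a, b, c, d} \<subseteq> Vs"
    and "{a, b} \<in> E" "{c, b} \<in> E" "{c, d} \<in> E" "{a, d} \<in> E"
  shows "\<not> ugraph_acyclic Vs E"
proof -
  let ?vs = "[a, b, c, d]"
  have "\<forall>j < length ?vs. {?vs ! j, ?vs ! ((j + 1) mod length ?vs)} \<in> E"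
  proof (intro allI impI)
    fix j assume "j < length ?vs"
    then have "j = 0 \<or> j = 1 \<or> j = 2 \<or> j = 3" by auto
    then show "{?vs ! j, ?vs ! ((j + 1) mod length ?vs)} \<in> E"
      using assms(3-6) by (elim disjE) (simp_all add: insert_commute)
  qed
  moreover have "length ?vs \<ge> 3" "set ?vs \<subseteq> Vs" using assms(2) by simp_all
  ultimately show ?thesis using assms(1) unfolding ugraph_acyclic_def by blast
qed

lemma profiles_nonempty: "profiles V A \<noteq> {}"
proof -
  obtain r where "well_order_on A r" using well_order_on by blast
  then have "(\<lambda>i. if i \<in> V then r else {}) \<in> profiles V A"
    by (simp add: profiles_def well_order_on_def)
  then show ?thesis by blast
qed

lemma restrict_profile_in_profiles:
  assumes "P \<in> profiles V A" "B \<subseteq> A"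
  shows "restrict_profile P B \<in> profiles V B"
  using assms unfolding profiles_def restrict_profile_def
  by (auto intro: linear_order_on_Restr_subset)

lemma profiles_glue:
  assumes "Q \<in> profiles V B" "R \<in> profiles V C" "B \<inter> C = {}"
  obtains P where "P \<in> profiles V (B \<union> C)"
    and "restrict_profile P B = Q" and "restrict_profile P C = R"
proof
  let ?P = "\<lambda>i. if i \<in> V then Q i \<union> R i \<union> B \<times> C else {}"
  have carriers: "Q i \<subseteq> B \<times> B" "R i \<subseteq> C \<times> C" for i
    using assms(1,2) by (cases "i \<in> V"; auto simp: profiles_def order_on_defs)+
  show "?P \<in> profiles V (B \<union> C)"
    using assms by (auto simp: profiles_def intro: linear_order_on_Un_disjoint)
  show "restrict_profile ?P B = Q"
    using carriers assms by (auto simp: restrict_profile_def profiles_def fun_eq_iff; blast)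
  show "restrict_profile ?P C = R"
    using carriers assms by (auto simp: restrict_profile_def profiles_def fun_eq_iff; blast)
qed

lemma marian_imp_ugraph_acyclic:
  assumes "marian V A F"
  shows "ugraph_acyclic A (range_graph_edges V A F)"
proof -
  obtain m where "\<forall>P\<in>profiles V A. m \<in> F P" using assms by (auto simp: marian_def)
  then show ?thesis
    by (intro ugraph_acyclic_if_common_vertex) (auto simp: range_graph_edges_def)
qed

locale reduction =
  fixes V :: "'v set" and A B C :: "'a set"
    and F :: "('v \<Rightarrow> 'a rel) \<Rightarrow> 'a set" and G H :: "('v \<Rightarrow> 'a rel) \<Rightarrow> 'a"
  assumes partition: "B \<union> C = A" "B \<inter> C = {}"
    and G_in: "Q \<in> profiles V B \<Longrightarrow> G Q \<in> B"
    and H_in: "Q \<in> profiles V C \<Longrightarrow> H Q \<in> C"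
    and F_eq: "P \<in> profiles V A \<Longrightarrow> F P = {G (restrict_profile P B), H (restrict_profile P C)}"
begin

lemma reduction_swap: "reduction V A C B F H G"
  using partition G_in H_in F_eq by unfold_locales (auto simp: insert_commute)

lemma G_restrict_in: "P \<in> profiles V A \<Longrightarrow> G (restrict_profile P B) \<in> B"
  using G_in restrict_profile_in_profiles partition by blast

lemma marian_if_part_singleton:
  assumes "B = {m}"
  shows "marian V A F"
  unfolding marian_def
proof (rule bexI)
  show "\<forall>P\<in>profiles V A. m \<in> F P"
  proof
    fix P assume P: "P \<in> profiles V A"
    then have "G (restrict_profile P B) = m" using G_restrict_in assms by blast
    then show "m \<in> F P" using F_eq[OF P] by simp
  qed
  show "m \<in> A" using assms partition by blast
qed

lemma two_in_part_if_not_marian: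
  assumes "\<not> marian V A F"
  obtains b b' where "b \<in> B" "b' \<in> B" "b \<noteq> b'"
proof -
  obtain P where "P \<in> profiles V A" using profiles_nonempty by blast
  then have b: "G (restrict_profile P B) \<in> B" (is "?b \<in> B") by (rule G_restrict_in)
  have "B \<noteq> {?b}" using marian_if_part_singleton assms by blast
  then show thesis using that b by blast
qed

lemma G_onto:
  assumes "weakly_viable V A F" "b \<in> B"
  obtains Q where "Q \<in> profiles V B" "G Q = b"
proof -
  obtain P where P: "P \<in> profiles V A" "b \<in> F P"
    using assms partition unfolding weakly_viable_def by blast
  have "H (restrict_profile P C) \<noteq> b"
    using H_in restrict_profile_in_profiles[OF P(1)] partition assms(2) by blast
  then have "G (restrict_profile P B) = b" using F_eq P by auto
  then show thesis using that restrict_profile_in_profiles[OF P(1)] partition by blast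
qed

lemma cross_pair_in_range:
  assumes "weakly_viable V A F" "b \<in> B" "c \<in> C"
  shows "{b, c} \<in> range_graph_edges V A F"
proof -
  obtain Q where Q: "Q \<in> profiles V B" "G Q = b" using G_onto assms by blast
  obtain R where R: "R \<in> profiles V C" "H R = c"
    using reduction.G_onto[OF reduction_swap] assms by blast
  obtain P where "P \<in> profiles V A" "restrict_profile P B = Q" "restrict_profile P C = R"
    using profiles_glue[OF Q(1) R(1)] partition by metis
  then show ?thesis using F_eq Q(2) R(2) unfolding range_graph_edges_def by force
qed

lemma ugraph_acyclic_imp_marian:
  assumes "weakly_viable V A F" "ugraph_acyclic A (range_graph_edges V A F)"
  shows "marian V A F"
proof (rule ccontr)
  assume not_marian: "\<not> marian V A F"
  then obtain b b' where b: "b \<in> B" "b' \<in> B" "b \<noteq> b'"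
    by (rule two_in_part_if_not_marian)
  from not_marian obtain c c' where c: "c \<in> C" "c' \<in> C" "c \<noteq> c'"
    by (rule reduction.two_in_part_if_not_marian[OF reduction_swap])
  let ?E = "range_graph_edges V A F"
  have "distinct [b, c, b', c']" "{b, c, b', c'} \<subseteq> A" using b c partition by auto
  moreover have "{b, c} \<in> ?E" "{b', c} \<in> ?E" "{b', c'} \<in> ?E" "{b, c'} \<in> ?E"
    using b c by (simp_all add: cross_pair_in_range[OF assms(1)])
  ultimately have "\<not> ugraph_acyclic A ?E" by (rule not_ugraph_acyclic_if_square)
  then show False using assms(2) by contradiction
qed

end

lemma reducibleE:
  assumes "reducible V A F"
  obtains B C G H where "reduction V A B C F G H"
proof -
  from assms obtain B C G H where "B \<union> C = A" "B \<inter> C = {}"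
    and "\<forall>Q\<in>profiles V B. G Q \<in> B" "\<forall>Q\<in>profiles V C. H Q \<in> C"
    and "\<forall>P\<in>profiles V A. F P = {G (restrict_profile P B), H (restrict_profile P C)}"
    unfolding reducible_def by blast
  then have "reduction V A B C F G H" by unfold_locales auto
  then show thesis by (rule that)
qed

theorem corollary30:
  fixes V :: "'v set" and A :: "'a set" and F :: "('v \<Rightarrow> 'a rel) \<Rightarrow> 'a set"
  assumes "finite V" and "V \<noteq> {}" and "finite A"
    and "consular_rule V A F"
    and "weakly_viable V A F" and "reducible V A F"
    and "SPP V A F" and "SPO V A F"
  shows "marian V A F \<longleftrightarrow> ugraph_acyclic A (range_graph_edges V A F)"
proof -
  obtain B C G H where "reduction V A B C F G H" using assms(6) by (rule reducibleE)
  then show ?thesis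
    using marian_imp_ugraph_acyclic reduction.ugraph_acyclic_imp_marian assms(5) by blast
qed

end
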